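(* Fix $\delta>0$. For $\pi\in\{\texttt{G-HCLA},\texttt{GP-HCLA}\}$, the set $\mathcal B=\{t\ge1:|U(G(t);\hat\mu(t))-U(G(t);\mu)|\ge\delta\}$ satisfies $\mathbb E[|\mathcal B|]\le 4MK+\frac{2M^3K}{\delta^2}$.
   Context: Model: $M$ agents, $K>M$ arms; pair $(m,k)$ has a Bernoulli distribution of mean $\mu_{m,k}\in[0,1]$. Each round each agent pulls an arm (assignment $G(t)$ of arms $k^G_m$ to agents, a "matching"; $\mathcal G$ the set of assignments); an agent receives an independent Bernoulli sample of its arm if no other agent pulls that arm, else $0$. Each agent may also query one arm per round as a hint, observing an independent sample. $U(G;w)=\sum_m w_{m,k^G_m}\mathbb 1\{\forall m'\ne m:k^G_{m'}\ne k^G_m\}$; $G^*=\arg\max U(G;\mu)$ unique. $\mathrm{kl}$ is the Bernoulli KL divergence, $f(t)=\log t+4\log\log t$. Covering matchings $R_i$ ($i\le K$) match agent $m$ to arm $((m+i-2)\bmod K)+1$, $\mathcal R=\{R_i\}$. $\texttt{Hungarian}(w)$ returns an assignment of agents to distinct arms maximizing $\sum_m w_{m,k^G_m}$. Both algorithms are centralized and maintain per edge $N_{m,k}(t)$ (number of observations of $(m,k)$ from pulls and hints before $t$), their empirical mean $\hat\mu_{m,k}(t)$, and $d_{m,k}(t)=\sup\{q\ge0:N_{m,k}(t)\mathrm{kl}(\hat\mu_{m,k}(t),q)\le f(t)\}$ (initialized to $0$). At round $t$: $G(t)=\texttt{Hungarian}(\hat\mu(t))$, $G'(t)=\texttt{Hungarian}(d(t))$;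 if $U(G'(t);d(t))>U(G(t);\hat\mu(t))$ a hint matching $G^{\mathrm{hint}}(t)$ is chosen and each agent queries its arm in it; then agents pull per $G(t)$ and update. In $\texttt{GP-HCLA}$, $G^{\mathrm{hint}}(t)$ is, w.p. $1/2$ each, either the $R\in\mathcal R$ containing an edge of $G'(t)$ with minimal $N_{m,k}(t)$, or a uniformly random element of $\mathcal R$. In $\texttt{G-HCLA}$, $G^{\mathrm{hint}}(t)$ is, w.p. $1/2$ each, either $G'(t)$ or a uniformly random element of $\mathcal R$. *)

theory Defs
  imports "HOL-Probability.Probability"
begin

text \<open>Agents are 1..M, arms are 1..K. An assignment maps each agent to an arm
(extensional outside {1..M}).\<close>

type_synonym assignment = "nat \<Rightarrow> nat"
type_synonym weights = "nat \<Rightarrow> nat \<Rightarrow> real"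
type_synonym hstate = "(nat \<Rightarrow> nat \<Rightarrow> nat) \<times> (nat \<Rightarrow> nat \<Rightarrow> nat)"
  \<comment> \<open>(N, S): numbers of observations and sums of observed samples per edge\<close>
type_synonym round_rand = "bool \<times> nat \<times> (nat \<times> nat \<Rightarrow> bool) \<times> (nat \<times> nat \<Rightarrow> bool)"
  \<comment> \<open>(coin, uniform index into the covering matchings, hint samples, pull samples)\<close>

datatype algo = G_HCLA | GP_HCLA

definition assignments :: "nat \<Rightarrow> nat \<Rightarrow> assignment set" where
  "assignments M K = ({1..M} \<rightarrow>\<^sub>E {1..K})"

definition matchings :: "nat \<Rightarrow> nat \<Rightarrow> assignment set" where
  "matchings M K = {G \<in> assignments M K. inj_on G {1..M}}"

definition utility :: "nat \<Rightarrow> assignment \<Rightarrow> weights \<Rightarrow> real" where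
  "utility M G w = (\<Sum>m\<in>{1..M}. w m (G m) *
      (if (\<forall>m'\<in>{1..M}. m' \<noteq> m \<longrightarrow> G m' \<noteq> G m) then 1 else 0))"

definition is_hungarian :: "nat \<Rightarrow> nat \<Rightarrow> (weights \<Rightarrow> assignment) \<Rightarrow> bool" where
  "is_hungarian M K hung \<longleftrightarrow> (\<forall>w. hung w \<in> matchings M K \<and>
     (\<forall>G\<in>matchings M K. (\<Sum>m\<in>{1..M}. w m (G m)) \<le> (\<Sum>m\<in>{1..M}. w m (hung w m))))"

definition covering :: "nat \<Rightarrow> nat \<Rightarrow> nat \<Rightarrow> assignment" where
  "covering M K i = (\<lambda>m. if m \<in> {1..M} then ((m + i - 2) mod K) + 1 else undefined)"

definition coverings :: "nat \<Rightarrow> nat \<Rightarrow> assignment set" where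
  "coverings M K = covering M K ` {1..K}"

definition is_min_selector :: "nat \<Rightarrow> ((nat \<Rightarrow> nat \<Rightarrow> nat) \<Rightarrow> assignment \<Rightarrow> nat) \<Rightarrow> bool" where
  "is_min_selector M sel \<longleftrightarrow> (\<forall>N G. sel N G \<in> {1..M} \<and>
     (\<forall>m\<in>{1..M}. N (sel N G) (G (sel N G)) \<le> N m (G m)))"

definition xlr :: "real \<Rightarrow> real \<Rightarrow> ereal" where
  "xlr a b = (if a = 0 then 0 else if b = 0 then \<infinity> else ereal (a * ln (a / b)))"

definition kl :: "real \<Rightarrow> real \<Rightarrow> ereal" where
  "kl p q = xlr p q + xlr (1 - p) (1 - q)"

text \<open>f(t) = log t + 4 log log t; for t = 1 (where it equals -\<infinity>) a negative value is used,
which has the same effect in the definition of d.\<close>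
definition fexp :: "nat \<Rightarrow> real" where
  "fexp t = (if t \<le> 1 then -1 else ln (real t) + 4 * ln (ln (real t)))"

definition muhat :: "hstate \<Rightarrow> weights" where
  "muhat st m k = (if fst st m k = 0 then 0 else real (snd st m k) / real (fst st m k))"

definition dval :: "nat \<Rightarrow> hstate \<Rightarrow> weights" where
  "dval t st m k = (let A = {q::real. 0 \<le> q \<and> q \<le> 1 \<and>
        ereal (real (fst st m k)) * kl (muhat st m k) q \<le> ereal (fexp t)}
     in if A = {} then 0 else Sup A)"

definition hint_matching :: "algo \<Rightarrow> nat \<Rightarrow> nat \<Rightarrow> ((nat \<Rightarrow> nat \<Rightarrow> nat) \<Rightarrow> assignment \<Rightarrow> nat)
    \<Rightarrow> hstate \<Rightarrow> assignment \<Rightarrow> bool \<Rightarrow> nat \<Rightarrow> assignment" where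
  "hint_matching alg M K sel st G' c r =
     (if c then (case alg of
          G_HCLA \<Rightarrow> G'
        | GP_HCLA \<Rightarrow> (let m = sel (fst st) G' in
             THE R. R \<in> coverings M K \<and> R m = G' m))
      else covering M K r)"

definition step :: "algo \<Rightarrow> nat \<Rightarrow> nat \<Rightarrow> (weights \<Rightarrow> assignment)
    \<Rightarrow> ((nat \<Rightarrow> nat \<Rightarrow> nat) \<Rightarrow> assignment \<Rightarrow> nat) \<Rightarrow> nat \<Rightarrow> hstate \<Rightarrow> round_rand \<Rightarrow> hstate" where
  "step alg M K hung sel t st \<omega> =
     (let (c, r, h, p) = \<omega>; N = fst st; S = snd st;
          mh = muhat st; d = dval t st; G = hung mh; G' = hung d;
          hon = (utility M G' d > utility M G mh);
          H = hint_matching alg M K sel st G' c r;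
          hint_edge = (\<lambda>m k. hon \<and> m \<in> {1..M} \<and> H m = k);
          pull_edge = (\<lambda>m k. m \<in> {1..M} \<and> G m = k \<and> (\<forall>m'\<in>{1..M}. m' \<noteq> m \<longrightarrow> G m' \<noteq> k))
      in (\<lambda>m k. N m k + (if hint_edge m k then 1 else 0) + (if pull_edge m k then 1 else 0),
          \<lambda>m k. S m k + (if hint_edge m k \<and> h (m, k) then 1 else 0)
                     + (if pull_edge m k \<and> p (m, k) then 1 else 0)))"

text \<open>hist ... \<omega> n = state (N, S) after rounds 1..n, i.e. the state at the start of round n+1.
Round t uses the randomness \<omega> t.\<close>
primrec hist :: "algo \<Rightarrow> nat \<Rightarrow> nat \<Rightarrow> (weights \<Rightarrow> assignment)
    \<Rightarrow> ((nat \<Rightarrow> nat \<Rightarrow> nat) \<Rightarrow> assignment \<Rightarrow> nat) \<Rightarrow> (nat \<Rightarrow> round_rand) \<Rightarrow> nat \<Rightarrow> hstate" where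
  "hist alg M K hung sel \<omega> 0 = (\<lambda>_ _. 0, \<lambda>_ _. 0)"
| "hist alg M K hung sel \<omega> (Suc n) =
     step alg M K hung sel (Suc n) (hist alg M K hung sel \<omega> n) (\<omega> (Suc n))"

definition round_pmf :: "nat \<Rightarrow> nat \<Rightarrow> weights \<Rightarrow> round_rand pmf" where
  "round_pmf M K \<mu> =
     bind_pmf (bernoulli_pmf (1/2)) (\<lambda>c.
     bind_pmf (pmf_of_set {1..K}) (\<lambda>r.
     bind_pmf (Pi_pmf ({1..M} \<times> {1..K}) False (\<lambda>(m, k). bernoulli_pmf (\<mu> m k))) (\<lambda>h.
     bind_pmf (Pi_pmf ({1..M} \<times> {1..K}) False (\<lambda>(m, k). bernoulli_pmf (\<mu> m k))) (\<lambda>p.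
     return_pmf (c, r, h, p)))))"

definition process :: "nat \<Rightarrow> nat \<Rightarrow> weights \<Rightarrow> (nat \<Rightarrow> round_rand) measure" where
  "process M K \<mu> = PiM UNIV (\<lambda>_. measure_pmf (round_pmf M K \<mu>))"

definition bad_rounds :: "algo \<Rightarrow> nat \<Rightarrow> nat \<Rightarrow> weights \<Rightarrow> (weights \<Rightarrow> assignment)
    \<Rightarrow> ((nat \<Rightarrow> nat \<Rightarrow> nat) \<Rightarrow> assignment \<Rightarrow> nat) \<Rightarrow> real \<Rightarrow> (nat \<Rightarrow> round_rand) \<Rightarrow> nat set" where
  "bad_rounds alg M K \<mu> hung sel \<delta> \<omega> =
     {t. 1 \<le> t \<and>
        (let st = hist alg M K hung sel \<omega> (t - 1); G = hung (muhat st) in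
         \<bar>utility M G (muhat st) - utility M G \<mu>\<bar> \<ge> \<delta>)}"

end

theory Submission
  imports Defs
begin

text \<open>Give every edge (m, k) the potential V: the expected number of future sample counts at
which its empirical mean is \<delta>/M-far from \<mu> m k, if it keeps receiving fresh samples. Every
observation of the edge lowers V in expectation by the indicator that its current mean deviates.
In a bad round the utility error \<delta> of the pulled matching is spread over its M edges, so some
pulled edge deviates by \<delta>/M. Hence the sum of the potentials pays in expectation for every bad
round, and the expected number of bad rounds is at most its initial value, which Hoeffding's
inequality bounds by M K (1 + M^2/\<delta>^2).\<close>

lemma (in prob_space) nn_integral_const_add:
  "f \<in> borel_measurable M \<Longrightarrow> (\<integral>\<^sup>+x. c + f x \<partial>M) = c + (\<integral>\<^sup>+x. f x \<partial>M)"
  by (simp add: nn_integral_add emeasure_space_1)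

lemma add_nn_integral_pmf_le:
  fixes a b :: ennreal
  assumes "\<And>x. a + f x \<le> b"
  shows "a + (\<integral>\<^sup>+x. f x \<partial>measure_pmf p) \<le> b"
proof -
  have "a + (\<integral>\<^sup>+x. f x \<partial>measure_pmf p) = (\<integral>\<^sup>+x. a + f x \<partial>measure_pmf p)"
    by (simp add: measure_pmf.nn_integral_const_add)
  also have "\<dots> \<le> (\<integral>\<^sup>+x. b \<partial>measure_pmf p)"
    by (intro nn_integral_mono assms)
  finally show ?thesis
    by simp
qed

lemma nn_integral_Pi_pmf_component:
  assumes "finite A" "e \<in> A"
  shows "(\<integral>\<^sup>+h. f (h e) \<partial>Pi_pmf A d P) = (\<integral>\<^sup>+y. f y \<partial>P e)"
proof -
  have "(\<integral>\<^sup>+h. f (h e) \<partial>Pi_pmf A d P) = (\<integral>\<^sup>+y. f y \<partial>map_pmf (\<lambda>h. h e) (Pi_pmf A d P))"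
    by simp
  also have "map_pmf (\<lambda>h. h e) (Pi_pmf A d P) = P e"
    using assms by (simp add: Pi_pmf_component)
  finally show ?thesis .
qed

lemma nn_integral_Pi_pmf_pair_sum:
  fixes g :: "'a \<Rightarrow> 'b \<Rightarrow> 'b \<Rightarrow> ennreal"
  assumes A: "finite A"
  shows "(\<integral>\<^sup>+h. \<integral>\<^sup>+p. (\<Sum>e\<in>A. g e (h e) (p e)) \<partial>Pi_pmf A d P \<partial>Pi_pmf A d P)
           = (\<Sum>e\<in>A. \<integral>\<^sup>+y1. \<integral>\<^sup>+y2. g e y1 y2 \<partial>P e \<partial>P e)"
proof -
  have "(\<integral>\<^sup>+h. \<integral>\<^sup>+p. (\<Sum>e\<in>A. g e (h e) (p e)) \<partial>Pi_pmf A d P \<partial>Pi_pmf A d P)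
      = (\<Sum>e\<in>A. \<integral>\<^sup>+h. \<integral>\<^sup>+p. g e (h e) (p e) \<partial>Pi_pmf A d P \<partial>Pi_pmf A d P)"
    by (simp add: nn_integral_sum)
  also have "\<dots> = (\<Sum>e\<in>A. \<integral>\<^sup>+y1. \<integral>\<^sup>+y2. g e y1 y2 \<partial>P e \<partial>P e)"
  proof (intro sum.cong refl)
    fix e assume e: "e \<in> A"
    have "(\<integral>\<^sup>+h. \<integral>\<^sup>+p. g e (h e) (p e) \<partial>Pi_pmf A d P \<partial>Pi_pmf A d P)
        = (\<integral>\<^sup>+h. \<integral>\<^sup>+y2. g e (h e) y2 \<partial>P e \<partial>Pi_pmf A d P)"
      by (rule nn_integral_cong, rule nn_integral_Pi_pmf_component[OF A e])
    also have "\<dots> = (\<integral>\<^sup>+y1. \<integral>\<^sup>+y2. g e y1 y2 \<partial>P e \<partial>P e)"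
      by (rule nn_integral_Pi_pmf_component[OF A e])
    finally show "(\<integral>\<^sup>+h. \<integral>\<^sup>+p. g e (h e) (p e) \<partial>Pi_pmf A d P \<partial>Pi_pmf A d P)
        = (\<integral>\<^sup>+y1. \<integral>\<^sup>+y2. g e y1 y2 \<partial>P e \<partial>P e)" .
  qed
  finally show ?thesis .
qed

lemma countable_finite_support: "countable {f :: 'a::countable \<Rightarrow> nat. finite {x. f x \<noteq> 0}}"
proof (rule countable_image_inj_on)
  show "countable ((\<lambda>f. {(x, f x) | x. f x \<noteq> 0}) ` {f :: 'a \<Rightarrow> nat. finite {x. f x \<noteq> 0}})"
    by (rule countable_subset[OF _ countable_Collect_finite]) auto
  show "inj_on (\<lambda>f. {(x, f x) | x. f x \<noteq> 0}) {f :: 'a \<Rightarrow> nat. finite {x. f x \<noteq> 0}}"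
    by (auto simp: inj_on_def fun_eq_iff set_eq_iff) (metis neq0_conv)
qed

lemma exists_abs_ge_average:
  fixes f :: "'a \<Rightarrow> real"
  assumes "finite A" "A \<noteq> {}" "\<delta> \<le> \<bar>\<Sum>a\<in>A. f a\<bar>"
  shows "\<exists>a\<in>A. \<delta> / card A \<le> \<bar>f a\<bar>"
proof (rule ccontr)
  assume "\<not> ?thesis"
  then have "(\<Sum>a\<in>A. \<bar>f a\<bar>) < (\<Sum>a\<in>A. \<delta> / card A)"
    using assms(1,2) by (intro sum_strict_mono) auto
  then show False
    using assms sum_abs[of f A] by simp
qed

section \<open>Deviation potential of a single edge\<close>

definition empirical_mean :: "nat \<Rightarrow> nat \<Rightarrow> real" where
  "empirical_mean n s = (if n = 0 then 0 else real s / real n)"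

definition mean_deviates :: "real \<Rightarrow> real \<Rightarrow> nat \<Rightarrow> nat \<Rightarrow> bool" where
  "mean_deviates q \<epsilon> n s \<longleftrightarrow> \<epsilon> \<le> \<bar>empirical_mean n s - q\<bar>"

definition deviation_potential :: "real \<Rightarrow> real \<Rightarrow> nat \<Rightarrow> nat \<Rightarrow> ennreal" where
  "deviation_potential q \<epsilon> n s =
     (\<Sum>i. emeasure (measure_pmf (binomial_pmf i q)) {x. mean_deviates q \<epsilon> (n + i) (s + x)})"

lemma deviation_potential_unfold:
  assumes q: "q \<in> {0..1}"
  shows "deviation_potential q \<epsilon> n s = of_bool (mean_deviates q \<epsilon> n s) +
     (\<integral>\<^sup>+y. deviation_potential q \<epsilon> (Suc n) (s + of_bool y) \<partial>bernoulli_pmf q)"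
proof -
  define f where "f i = emeasure (measure_pmf (binomial_pmf i q)) {x. mean_deviates q \<epsilon> (n + i) (s + x)}" for i
  have "f (Suc i) = (\<integral>\<^sup>+y. emeasure (measure_pmf (binomial_pmf i q))
      {x. mean_deviates q \<epsilon> (Suc n + i) (s + of_bool y + x)} \<partial>bernoulli_pmf q)" for i
    using q by (simp add: f_def binomial_pmf_Suc nn_integral_indicator[symmetric] indicator_def
        add_ac cong: if_cong)
  then have "(\<Sum>i. f (Suc i)) = (\<integral>\<^sup>+y. deviation_potential q \<epsilon> (Suc n) (s + of_bool y) \<partial>bernoulli_pmf q)"
    by (simp add: deviation_potential_def nn_integral_suminf)
  moreover have "f 0 = of_bool (mean_deviates q \<epsilon> n s)"
    using q by (simp add: f_def binomial_pmf_0)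
  moreover have "deviation_potential q \<epsilon> n s = (\<Sum>i. f (Suc i)) + f 0"
    unfolding deviation_potential_def f_def[symmetric] using suminf_offset[of f 1] by simp
  ultimately show ?thesis by (simp add: add.commute)
qed

lemma deviation_potential_observe:
  assumes "q \<in> {0..1}"
  shows "(\<integral>\<^sup>+y. deviation_potential q \<epsilon> (Suc n) (s + of_bool y) \<partial>bernoulli_pmf q)
           \<le> deviation_potential q \<epsilon> n s"
  using deviation_potential_unfold[OF assms, of \<epsilon> n s] by simp

lemma deviation_potential_round:
  assumes q: "q \<in> {0..1}"
  shows "of_bool (pull \<and> mean_deviates q \<epsilon> n s) +
     (\<integral>\<^sup>+y1. \<integral>\<^sup>+y2. deviation_potential q \<epsilon> (n + of_bool hint + of_bool pull)
        (s + of_bool (hint \<and> y1) + of_bool (pull \<and> y2)) \<partial>bernoulli_pmf q \<partial>bernoulli_pmf q)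
     \<le> deviation_potential q \<epsilon> n s"
proof (cases hint)
  case True
  have "(\<integral>\<^sup>+y2. deviation_potential q \<epsilon> (Suc n + of_bool pull) (s + of_bool y1 + of_bool (pull \<and> y2))
      \<partial>bernoulli_pmf q) \<le> deviation_potential q \<epsilon> (Suc n) (s + of_bool y1)" for y1
    using deviation_potential_observe[OF q] by (cases pull) simp_all
  then have "(\<integral>\<^sup>+y1. \<integral>\<^sup>+y2. deviation_potential q \<epsilon> (Suc n + of_bool pull)
      (s + of_bool y1 + of_bool (pull \<and> y2)) \<partial>bernoulli_pmf q \<partial>bernoulli_pmf q)
      \<le> (\<integral>\<^sup>+y1. deviation_potential q \<epsilon> (Suc n) (s + of_bool y1) \<partial>bernoulli_pmf q)"
    by (intro nn_integral_mono)
  then show ?thesis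
    using True deviation_potential_unfold[OF q, of \<epsilon> n s]
    by (cases "pull \<and> mean_deviates q \<epsilon> n s") (auto simp: add_increasing)
next
  case False
  then show ?thesis
    using deviation_potential_unfold[OF q, of \<epsilon> n s] by (cases pull) simp_all
qed

lemma suminf_hoeffding_bound_le:
  fixes \<epsilon> :: real
  assumes "\<epsilon> > 0"
  shows "(\<Sum>i. ennreal (2 * exp (- 2 * real (Suc i) * \<epsilon>\<^sup>2))) \<le> ennreal (1 / \<epsilon>\<^sup>2)"
proof -
  define x where "x = exp (- 2 * \<epsilon>\<^sup>2)"
  have x: "0 < x" "x < 1" using assms by (auto simp: x_def)
  have geometric: "exp (- 2 * real (Suc i) * \<epsilon>\<^sup>2) = x * x ^ i" for i
    by (simp add: x_def algebra_simps flip: exp_of_nat_mult exp_add)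
  have "(\<Sum>i. ennreal (2 * exp (- 2 * real (Suc i) * \<epsilon>\<^sup>2))) = ennreal (2 * x / (1 - x))"
    unfolding geometric using x
    by (simp add: suminf_ennreal2 summable_geometric suminf_mult suminf_geometric)
  also have "\<dots> \<le> ennreal (1 / \<epsilon>\<^sup>2)"
  proof (rule ennreal_leI)
    have "1 + 2 * \<epsilon>\<^sup>2 \<le> 1 / x"
      using exp_ge_add_one_self[of "2 * \<epsilon>\<^sup>2"] by (simp add: x_def exp_minus field_simps)
    then show "2 * x / (1 - x) \<le> 1 / \<epsilon>\<^sup>2" using x assms by (simp add: field_simps)
  qed
  finally show ?thesis .
qed

lemma deviation_potential_initial_le:
  assumes q: "q \<in> {0..1}" and \<epsilon>: "\<epsilon> > 0"
  shows "deviation_potential q \<epsilon> 0 0 \<le> ennreal (1 + 1 / \<epsilon>\<^sup>2)"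
proof -
  define f where "f i = emeasure (measure_pmf (binomial_pmf i q)) {x. mean_deviates q \<epsilon> i x}" for i
  have "f (Suc i) \<le> ennreal (2 * exp (- 2 * real (Suc i) * \<epsilon>\<^sup>2))" for i
  proof -
    have "f (Suc i) = ennreal (measure_pmf.prob (binomial_pmf (Suc i) q) {x. \<bar>x / Suc i - q\<bar> \<ge> \<epsilon>})"
      by (simp add: f_def mean_deviates_def empirical_mean_def measure_pmf.emeasure_eq_measure
          del: of_nat_Suc)
    also have "\<dots> \<le> ennreal (2 * exp (- 2 * real (Suc i) * \<epsilon>\<^sup>2))"
      using binomial_distribution.prob_abs_ge'[of q "Suc i" \<epsilon>] q \<epsilon>
      by (intro ennreal_leI) (simp add: binomial_distribution_def)
    finally show ?thesis .
  qed
  then have "(\<Sum>i. f (Suc i)) \<le> (\<Sum>i. ennreal (2 * exp (- 2 * real (Suc i) * \<epsilon>\<^sup>2)))"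
    by (intro suminf_le) simp_all
  also have "\<dots> \<le> ennreal (1 / \<epsilon>\<^sup>2)"
    by (rule suminf_hoeffding_bound_le[OF \<epsilon>])
  finally have "(\<Sum>i. f (Suc i)) \<le> ennreal (1 / \<epsilon>\<^sup>2)" .
  moreover have "f 0 \<le> 1"
    by (simp add: f_def measure_pmf.emeasure_le_1)
  moreover have "deviation_potential q \<epsilon> 0 0 = (\<Sum>i. f (Suc i)) + f 0"
    using suminf_offset[of f 1] by (simp add: deviation_potential_def f_def[abs_def])
  ultimately show ?thesis
    by (simp add: ennreal_plus add.commute add_mono)
qed

section \<open>Chains driven by i.i.d. streams\<close>

primrec stream_chain :: "'s \<Rightarrow> (nat \<Rightarrow> 's \<Rightarrow> 'r \<Rightarrow> 's) \<Rightarrow> 'r stream \<Rightarrow> nat \<Rightarrow> 's" where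
  "stream_chain x F \<omega> 0 = x"
| "stream_chain x F \<omega> (Suc n) = F n (stream_chain x F \<omega> n) (\<omega> !! n)"

lemma stream_chain_SCons:
  "stream_chain x F (y ## \<omega>) (Suc n) = stream_chain (F 0 x y) (\<lambda>n. F (Suc n)) \<omega> n"
  by (induction n) simp_all

lemma measurable_stream_chain:
  fixes p :: "'r pmf"
  assumes C: "countable C" "x \<in> C" "\<And>n z y. z \<in> C \<Longrightarrow> F n z y \<in> C"
  shows "(\<lambda>\<omega>. stream_chain x F \<omega> n) \<in> stream_space (measure_pmf p) \<rightarrow>\<^sub>M count_space C"
proof (induction n)
  case 0
  then show ?case using C by simp
next
  case (Suc n)
  have "(\<lambda>\<omega>. F n z (\<omega> !! n)) \<in> stream_space (measure_pmf p) \<rightarrow>\<^sub>M count_space C" if "z \<in> C" for z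
    using C(3)[OF that] by (intro measurable_compose[OF measurable_snth]) auto
  then show ?case
    using measurable_compose_countable'[where f="\<lambda>z \<omega>. F n z (\<omega> !! n)", OF _ Suc C(1)] by simp
qed

lemma borel_measurable_stream_chain:
  fixes p :: "'r pmf"
  assumes "countable C" "x \<in> C" "\<And>n z y. z \<in> C \<Longrightarrow> F n z y \<in> C"
  shows "(\<lambda>\<omega>. g (stream_chain x F \<omega> n)) \<in> borel_measurable (stream_space (measure_pmf p))"
  using measurable_compose_countable'[where f="\<lambda>z \<omega>. g z",
      OF _ measurable_stream_chain[where F=F, OF assms] assms(1)] by simp

lemma nn_integral_stream_chain_horizon_le:
  fixes p :: "'r pmf" and c \<Phi> :: "'s \<Rightarrow> ennreal"
  assumes C: "countable C" "x \<in> C" "\<And>n z y. z \<in> C \<Longrightarrow> F n z y \<in> C"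
    and drift: "\<And>n z. z \<in> C \<Longrightarrow> c z + (\<integral>\<^sup>+y. \<Phi> (F n z y) \<partial>p) \<le> \<Phi> z"
  shows "(\<integral>\<^sup>+\<omega>. (\<Sum>n<T. c (stream_chain x F \<omega> n)) + \<Phi> (stream_chain x F \<omega> T)
           \<partial>stream_space (measure_pmf p)) \<le> \<Phi> x"
  using C drift
proof (induction T arbitrary: x F)
  case 0
  interpret S: prob_space "stream_space (measure_pmf p)"
    by (rule prob_space.prob_space_stream_space[OF measure_pmf.prob_space_axioms])
  show ?case by (simp add: S.emeasure_space_1)
next
  case (Suc T)
  interpret S: prob_space "stream_space (measure_pmf p)"
    by (rule prob_space.prob_space_stream_space[OF measure_pmf.prob_space_axioms])
  define R where "R z \<omega> = (\<Sum>n<T. c (stream_chain z (\<lambda>n. F (Suc n)) \<omega> n))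
    + \<Phi> (stream_chain z (\<lambda>n. F (Suc n)) \<omega> T)" for z \<omega>
  have closed: "F 0 x y \<in> C" "\<And>n z y. z \<in> C \<Longrightarrow> F (Suc n) z y \<in> C" for y
    using Suc.prems by auto
  have R_measurable: "R (F 0 x y) \<in> borel_measurable (stream_space (measure_pmf p))" for y
    unfolding R_def
    using borel_measurable_stream_chain[where F="\<lambda>n. F (Suc n)", OF Suc.prems(1) closed]
    by measurable
  have shift: "(\<Sum>n<Suc T. c (stream_chain x F (y ## \<omega>) n)) + \<Phi> (stream_chain x F (y ## \<omega>) (Suc T))
      = c x + R (F 0 x y) \<omega>" for y \<omega>
    unfolding R_def sum.lessThan_Suc_shift stream_chain_SCons by (simp add: add.assoc)
  have "(\<lambda>\<omega>. (\<Sum>n<Suc T. c (stream_chain x F \<omega> n)) + \<Phi> (stream_chain x F \<omega> (Suc T)))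
      \<in> borel_measurable (stream_space (measure_pmf p))"
    using borel_measurable_stream_chain[where F=F, OF Suc.prems(1-3)] by measurable
  then have "(\<integral>\<^sup>+\<omega>. (\<Sum>n<Suc T. c (stream_chain x F \<omega> n)) + \<Phi> (stream_chain x F \<omega> (Suc T))
      \<partial>stream_space (measure_pmf p))
      = (\<integral>\<^sup>+y. \<integral>\<^sup>+\<omega>. c x + R (F 0 x y) \<omega> \<partial>stream_space (measure_pmf p) \<partial>p)"
    by (simp only: prob_space.nn_integral_stream_space[OF measure_pmf.prob_space_axioms] shift)
  also have "\<dots> = (\<integral>\<^sup>+y. c x + \<integral>\<^sup>+\<omega>. R (F 0 x y) \<omega> \<partial>stream_space (measure_pmf p) \<partial>p)"
    using R_measurable by (simp add: S.nn_integral_const_add)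
  also have "\<dots> \<le> (\<integral>\<^sup>+y. c x + \<Phi> (F 0 x y) \<partial>p)"
    using Suc.IH[where F="\<lambda>n. F (Suc n)", OF Suc.prems(1) closed] Suc.prems(4)
    by (intro nn_integral_mono add_left_mono) (simp add: R_def)
  also have "\<dots> = c x + (\<integral>\<^sup>+y. \<Phi> (F 0 x y) \<partial>p)"
    by (simp add: measure_pmf.nn_integral_const_add)
  also have "\<dots> \<le> \<Phi> x"
    by (rule Suc.prems(4)[OF Suc.prems(2)])
  finally show ?case .
qed

lemma nn_integral_stream_chain_le:
  fixes p :: "'r pmf" and c \<Phi> :: "'s \<Rightarrow> ennreal"
  assumes C: "countable C" "x \<in> C" "\<And>n z y. z \<in> C \<Longrightarrow> F n z y \<in> C"
    and drift: "\<And>n z. z \<in> C \<Longrightarrow> c z + (\<integral>\<^sup>+y. \<Phi> (F n z y) \<partial>p) \<le> \<Phi> z"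
  shows "(\<integral>\<^sup>+\<omega>. (\<Sum>n. c (stream_chain x F \<omega> n)) \<partial>stream_space (measure_pmf p)) \<le> \<Phi> x"
proof -
  have measurable: "(\<lambda>\<omega>. c (stream_chain x F \<omega> n)) \<in> borel_measurable (stream_space (measure_pmf p))" for n
    by (rule borel_measurable_stream_chain[where F=F, OF C])
  then have "(\<integral>\<^sup>+\<omega>. (\<Sum>n. c (stream_chain x F \<omega> n)) \<partial>stream_space (measure_pmf p))
      = (\<Sum>n. \<integral>\<^sup>+\<omega>. c (stream_chain x F \<omega> n) \<partial>stream_space (measure_pmf p))"
    by (simp add: nn_integral_suminf)
  also have "\<dots> = (SUP T. \<integral>\<^sup>+\<omega>. (\<Sum>n<T. c (stream_chain x F \<omega> n)) \<partial>stream_space (measure_pmf p))"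
    using measurable by (simp add: suminf_eq_SUP nn_integral_sum)
  also have "\<dots> \<le> \<Phi> x"
  proof (rule SUP_least)
    fix T
    have "(\<integral>\<^sup>+\<omega>. (\<Sum>n<T. c (stream_chain x F \<omega> n)) \<partial>stream_space (measure_pmf p))
        \<le> (\<integral>\<^sup>+\<omega>. (\<Sum>n<T. c (stream_chain x F \<omega> n)) + \<Phi> (stream_chain x F \<omega> T)
             \<partial>stream_space (measure_pmf p))"
      by (intro nn_integral_mono) simp
    also have "\<dots> \<le> \<Phi> x"
      by (rule nn_integral_stream_chain_horizon_le[OF C drift])
    finally show "(\<integral>\<^sup>+\<omega>. (\<Sum>n<T. c (stream_chain x F \<omega> n)) \<partial>stream_space (measure_pmf p)) \<le> \<Phi> x" .
  qed
  finally show ?thesis .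
qed

lemma nn_integral_stl_to_stream:
  fixes p :: "'r pmf"
  assumes [measurable]: "g \<in> borel_measurable (stream_space (measure_pmf p))"
  shows "(\<integral>\<^sup>+\<omega>. g (stl (to_stream \<omega>)) \<partial>PiM UNIV (\<lambda>_. measure_pmf p))
           = (\<integral>\<^sup>+s. g s \<partial>stream_space (measure_pmf p))"
proof -
  have "(\<integral>\<^sup>+\<omega>. g (stl (to_stream \<omega>)) \<partial>PiM UNIV (\<lambda>_. measure_pmf p))
      = (\<integral>\<^sup>+s. g (stl s) \<partial>distr (PiM UNIV (\<lambda>_. measure_pmf p)) (stream_space (measure_pmf p)) to_stream)"
    by (rule nn_integral_distr[symmetric]) measurable
  also have "\<dots> = (\<integral>\<^sup>+s. g (stl s) \<partial>stream_space (measure_pmf p))"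
    by (simp only: stream_space_eq_distr[symmetric])
  also have "\<dots> = (\<integral>\<^sup>+y. \<integral>\<^sup>+s. g s \<partial>stream_space (measure_pmf p) \<partial>p)"
    by (subst prob_space.nn_integral_stream_space[OF measure_pmf.prob_space_axioms]) simp_all
  finally show ?thesis
    by simp
qed

section \<open>The bandit process\<close>

definition hint_edge :: "algo \<Rightarrow> nat \<Rightarrow> nat \<Rightarrow> (weights \<Rightarrow> assignment)
    \<Rightarrow> ((nat \<Rightarrow> nat \<Rightarrow> nat) \<Rightarrow> assignment \<Rightarrow> nat) \<Rightarrow> nat \<Rightarrow> hstate \<Rightarrow> bool \<Rightarrow> nat \<Rightarrow> nat \<Rightarrow> nat \<Rightarrow> bool"
  where
  "hint_edge alg M K hung sel t st c r m k \<longleftrightarrow>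
     utility M (hung (dval t st)) (dval t st) > utility M (hung (muhat st)) (muhat st) \<and>
     m \<in> {1..M} \<and> hint_matching alg M K sel st (hung (dval t st)) c r m = k"

definition pulled_edge :: "nat \<Rightarrow> (weights \<Rightarrow> assignment) \<Rightarrow> hstate \<Rightarrow> nat \<Rightarrow> nat \<Rightarrow> bool" where
  "pulled_edge M hung st m k \<longleftrightarrow>
     m \<in> {1..M} \<and> hung (muhat st) m = k \<and> (\<forall>m'\<in>{1..M}. m' \<noteq> m \<longrightarrow> hung (muhat st) m' \<noteq> k)"

lemma step_eq:
  "step alg M K hung sel t st (c, r, h, p) =
    (\<lambda>m k. fst st m k + of_bool (hint_edge alg M K hung sel t st c r m k)
                      + of_bool (pulled_edge M hung st m k),
     \<lambda>m k. snd st m k + of_bool (hint_edge alg M K hung sel t st c r m k \<and> h (m, k))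
                      + of_bool (pulled_edge M hung st m k \<and> p (m, k)))"
  by (simp add: step_def hint_edge_def pulled_edge_def Let_def of_bool_def)

lemma finite_hint_edges: "finite {(m, k). hint_edge alg M K hung sel t st c r m k}"
proof (rule finite_subset)
  show "{(m, k). hint_edge alg M K hung sel t st c r m k}
      \<subseteq> (\<lambda>m. (m, hint_matching alg M K sel st (hung (dval t st)) c r m)) ` {1..M}"
    by (auto simp: hint_edge_def)
qed simp

lemma finite_pulled_edges: "finite {(m, k). pulled_edge M hung st m k}"
proof (rule finite_subset)
  show "{(m, k). pulled_edge M hung st m k} \<subseteq> (\<lambda>m. (m, hung (muhat st) m)) ` {1..M}"
    by (auto simp: pulled_edge_def)
qed simp

text \<open>The counts N and S live in an uncountable type; restricting to finitely supported counts
gives a countable state space, on which every function of the state is measurable.\<close>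

definition finitely_supported_counts :: "(nat \<Rightarrow> nat \<Rightarrow> nat) set" where
  "finitely_supported_counts = {N. finite {(m, k). N m k \<noteq> 0}}"

lemma countable_finitely_supported_counts: "countable finitely_supported_counts"
proof (rule countable_image_inj_on)
  show "countable (case_prod ` finitely_supported_counts)"
    by (rule countable_subset[OF _ countable_finite_support])
       (auto simp: finitely_supported_counts_def split_beta')
  show "inj_on case_prod finitely_supported_counts"
    by (auto simp: inj_on_def fun_eq_iff)
qed

lemma step_in_finitely_supported_counts:
  assumes "st \<in> finitely_supported_counts \<times> finitely_supported_counts"
  shows "step alg M K hung sel t st \<omega> \<in> finitely_supported_counts \<times> finitely_supported_counts"
proof -
  obtain c r h p where \<omega>: "\<omega> = (c, r, h, p)" by (cases \<omega>)
  let ?H = "{(m, k). hint_edge alg M K hung sel t st c r m k}"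
  let ?P = "{(m, k). pulled_edge M hung st m k}"
  have "{(m, k). fst (step alg M K hung sel t st \<omega>) m k \<noteq> 0} \<subseteq> {(m, k). fst st m k \<noteq> 0} \<union> ?H \<union> ?P"
    "{(m, k). snd (step alg M K hung sel t st \<omega>) m k \<noteq> 0} \<subseteq> {(m, k). snd st m k \<noteq> 0} \<union> ?H \<union> ?P"
    by (auto simp: \<omega> step_eq)
  moreover have "finite ({(m, k). fst st m k \<noteq> 0} \<union> ?H \<union> ?P)" "finite ({(m, k). snd st m k \<noteq> 0} \<union> ?H \<union> ?P)"
    using assms finite_hint_edges finite_pulled_edges
    by (auto simp: finitely_supported_counts_def mem_Times_iff)
  ultimately show ?thesis
    unfolding finitely_supported_counts_def mem_Times_iff mem_Collect_eq by (blast intro: finite_subset)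
qed

lemma hist_eq_stream_chain:
  "hist alg M K hung sel \<omega> n =
     stream_chain (\<lambda>_ _. 0, \<lambda>_ _. 0) (\<lambda>n. step alg M K hung sel (Suc n)) (stl (to_stream \<omega>)) n"
  by (induction n) (simp_all add: to_stream_def)

definition bad_round :: "nat \<Rightarrow> weights \<Rightarrow> (weights \<Rightarrow> assignment) \<Rightarrow> real \<Rightarrow> hstate \<Rightarrow> bool" where
  "bad_round M \<mu> hung \<delta> st \<longleftrightarrow>
     (let G = hung (muhat st) in \<delta> \<le> \<bar>utility M G (muhat st) - utility M G \<mu>\<bar>)"

lemma emeasure_bad_rounds:
  "emeasure (count_space UNIV) (bad_rounds alg M K \<mu> hung sel \<delta> \<omega>)
     = (\<Sum>n. of_bool (bad_round M \<mu> hung \<delta> (hist alg M K hung sel \<omega> n)))"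
proof -
  let ?B = "bad_rounds alg M K \<mu> hung sel \<delta> \<omega>"
  have "emeasure (count_space UNIV) ?B = (\<Sum>t. indicator ?B t)"
    by (simp flip: nn_integral_indicator nn_integral_count_space_nat)
  also have "\<dots> = (\<Sum>n. indicator ?B (n + 1)) + (\<Sum>n<1. indicator ?B n)"
    by (rule suminf_offset) (simp add: summableI)
  also have "\<dots> = (\<Sum>n. of_bool (bad_round M \<mu> hung \<delta> (hist alg M K hung sel \<omega> n)))"
    by (simp add: bad_rounds_def bad_round_def indicator_def Let_def)
  finally show ?thesis .
qed

lemma utility_matching:
  assumes "G \<in> matchings M K"
  shows "utility M G w = (\<Sum>m\<in>{1..M}. w m (G m))"
proof -
  have "inj_on G {1..M}"
    using assms by (simp add: matchings_def)
  then have "\<forall>m'\<in>{1..M}. m' \<noteq> m \<longrightarrow> G m' \<noteq> G m" if "m \<in> {1..M}" for m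
    using that by (metis inj_on_def)
  then show ?thesis
    unfolding utility_def by (intro sum.cong refl) simp
qed

lemma muhat_eq_empirical_mean: "muhat st m k = empirical_mean (fst st m k) (snd st m k)"
  by (simp add: muhat_def empirical_mean_def)

lemma bad_round_imp_deviating_pull:
  assumes hung: "is_hungarian M K hung" and M: "1 \<le> M" and bad: "bad_round M \<mu> hung \<delta> st"
  obtains m k where "(m, k) \<in> {1..M} \<times> {1..K}" "pulled_edge M hung st m k"
    "mean_deviates (\<mu> m k) (\<delta> / M) (fst st m k) (snd st m k)"
proof -
  define G where "G = hung (muhat st)"
  have G: "G \<in> matchings M K"
    using hung by (simp add: is_hungarian_def G_def)
  then have inj: "inj_on G {1..M}" and range: "\<And>m. m \<in> {1..M} \<Longrightarrow> G m \<in> {1..K}"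
    by (auto simp: matchings_def assignments_def)
  have "\<delta> \<le> \<bar>\<Sum>m\<in>{1..M}. muhat st m (G m) - \<mu> m (G m)\<bar>"
    using bad by (simp add: bad_round_def G_def [symmetric] utility_matching[OF G] sum_subtractf)
  then obtain m where m: "m \<in> {1..M}" and dev: "\<delta> / M \<le> \<bar>muhat st m (G m) - \<mu> m (G m)\<bar>"
    using exists_abs_ge_average[of "{1..M}" \<delta> "\<lambda>m. muhat st m (G m) - \<mu> m (G m)"] M by auto
  show ?thesis
  proof (rule that)
    show "(m, G m) \<in> {1..M} \<times> {1..K}"
      using m range by simp
    show "pulled_edge M hung st m (G m)"
      using m inj by (auto simp: pulled_edge_def G_def [symmetric] dest: inj_onD)
    show "mean_deviates (\<mu> m (G m)) (\<delta> / M) (fst st m (G m)) (snd st m (G m))"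
      using dev by (simp add: mean_deviates_def muhat_eq_empirical_mean)
  qed
qed

lemma bad_round_le_deviating_pulls:
  assumes "is_hungarian M K hung" "1 \<le> M"
  shows "of_bool (bad_round M \<mu> hung \<delta> st) \<le> (\<Sum>(m, k)\<in>{1..M} \<times> {1..K}.
     of_bool (pulled_edge M hung st m k \<and> mean_deviates (\<mu> m k) (\<delta> / M) (fst st m k) (snd st m k)) :: ennreal)"
proof (cases "bad_round M \<mu> hung \<delta> st")
  case True
  then obtain m k where "(m, k) \<in> {1..M} \<times> {1..K}" "pulled_edge M hung st m k"
    "mean_deviates (\<mu> m k) (\<delta> / M) (fst st m k) (snd st m k)"
    using bad_round_imp_deviating_pull[OF assms] by blast
  then show ?thesis
    using True member_le_sum[of "(m, k)" "{1..M} \<times> {1..K}"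
        "\<lambda>(m, k). of_bool (pulled_edge M hung st m k \<and> mean_deviates (\<mu> m k) (\<delta> / M) (fst st m k) (snd st m k)) :: ennreal"]
    by simp
qed simp

definition potential :: "nat \<Rightarrow> nat \<Rightarrow> weights \<Rightarrow> real \<Rightarrow> hstate \<Rightarrow> ennreal" where
  "potential M K \<mu> \<epsilon> st =
     (\<Sum>(m, k)\<in>{1..M} \<times> {1..K}. deviation_potential (\<mu> m k) \<epsilon> (fst st m k) (snd st m k))"

lemma potential_drift:
  assumes \<mu>: "\<forall>m\<in>{1..M}. \<forall>k\<in>{1..K}. 0 \<le> \<mu> m k \<and> \<mu> m k \<le> 1"
    and hung: "is_hungarian M K hung" and M: "1 \<le> M"
  shows "of_bool (bad_round M \<mu> hung \<delta> st)
     + (\<integral>\<^sup>+\<omega>. potential M K \<mu> (\<delta> / M) (step alg M K hung sel t st \<omega>) \<partial>round_pmf M K \<mu>)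
     \<le> potential M K \<mu> (\<delta> / M) st"
proof -
  let ?E = "{1..M} \<times> {1..K}" and ?\<epsilon> = "\<delta> / M"
  let ?samples = "Pi_pmf ?E False (\<lambda>(m, k). bernoulli_pmf (\<mu> m k))"
  have round: "of_bool (bad_round M \<mu> hung \<delta> st)
     + (\<integral>\<^sup>+h. \<integral>\<^sup>+p. potential M K \<mu> ?\<epsilon> (step alg M K hung sel t st (c, r, h, p)) \<partial>?samples \<partial>?samples)
     \<le> potential M K \<mu> ?\<epsilon> st" for c r
  proof -
    let ?hint = "\<lambda>m k. hint_edge alg M K hung sel t st c r m k" and ?pull = "\<lambda>m k. pulled_edge M hung st m k"
    define after where "after m k y1 y2 = deviation_potential (\<mu> m k) ?\<epsilon>
        (fst st m k + of_bool (?hint m k) + of_bool (?pull m k))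
        (snd st m k + of_bool (?hint m k \<and> y1) + of_bool (?pull m k \<and> y2))" for m k y1 y2
    have "of_bool (bad_round M \<mu> hung \<delta> st)
        + (\<integral>\<^sup>+h. \<integral>\<^sup>+p. potential M K \<mu> ?\<epsilon> (step alg M K hung sel t st (c, r, h, p)) \<partial>?samples \<partial>?samples)
        = of_bool (bad_round M \<mu> hung \<delta> st)
        + (\<integral>\<^sup>+h. \<integral>\<^sup>+p. (\<Sum>e\<in>?E. case_prod after e (h e) (p e)) \<partial>?samples \<partial>?samples)"
      by (simp add: potential_def step_eq after_def case_prod_beta)
    also have "\<dots> = of_bool (bad_round M \<mu> hung \<delta> st) + (\<Sum>(m, k)\<in>?E. \<integral>\<^sup>+y1. \<integral>\<^sup>+y2. after m k y1 y2
        \<partial>bernoulli_pmf (\<mu> m k) \<partial>bernoulli_pmf (\<mu> m k))"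
      by (subst nn_integral_Pi_pmf_pair_sum) (simp_all add: case_prod_beta)
    also have "\<dots> \<le> (\<Sum>(m, k)\<in>?E. of_bool (?pull m k \<and> mean_deviates (\<mu> m k) ?\<epsilon> (fst st m k) (snd st m k))
          + (\<integral>\<^sup>+y1. \<integral>\<^sup>+y2. after m k y1 y2 \<partial>bernoulli_pmf (\<mu> m k) \<partial>bernoulli_pmf (\<mu> m k)))"
      using bad_round_le_deviating_pulls[OF hung M, of \<mu> \<delta> st]
      by (simp add: sum.distrib case_prod_beta add_right_mono)
    also have "\<dots> \<le> potential M K \<mu> ?\<epsilon> st"
      unfolding potential_def using \<mu>
      by (intro sum_mono) (auto simp: after_def intro: deviation_potential_round)
    finally show ?thesis .
  qed
  show ?thesis
    unfolding round_pmf_def map_pmf_def[symmetric]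
    by (simp only: nn_integral_bind_pmf nn_integral_map_pmf)
       (rule add_nn_integral_pmf_le, rule add_nn_integral_pmf_le, rule round)
qed

lemma potential_initial_le:
  assumes \<mu>: "\<forall>m\<in>{1..M}. \<forall>k\<in>{1..K}. 0 \<le> \<mu> m k \<and> \<mu> m k \<le> 1"
    and M: "1 \<le> M" and \<delta>: "\<delta> > 0"
  shows "potential M K \<mu> (\<delta> / M) (\<lambda>_ _. 0, \<lambda>_ _. 0)
     \<le> ennreal (real M * real K + real M ^ 3 * real K / \<delta>\<^sup>2)"
proof -
  have "deviation_potential (\<mu> m k) (\<delta> / M) 0 0 \<le> ennreal (1 + 1 / (\<delta> / M)\<^sup>2)"
    if "(m, k) \<in> {1..M} \<times> {1..K}" for m k
    using that \<mu> M \<delta> by (intro deviation_potential_initial_le) auto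
  then have "potential M K \<mu> (\<delta> / M) (\<lambda>_ _. 0, \<lambda>_ _. 0) \<le> (\<Sum>e\<in>{1..M} \<times> {1..K}. ennreal (1 + 1 / (\<delta> / M)\<^sup>2))"
    unfolding potential_def by (intro sum_mono) auto
  also have "\<dots> = ennreal (\<Sum>e\<in>{1..M} \<times> {1..K}. 1 + 1 / (\<delta> / M)\<^sup>2)"
    by (rule sum_ennreal) simp
  also have "(\<Sum>e\<in>{1..M} \<times> {1..K}. 1 + 1 / (\<delta> / M)\<^sup>2) = real M * real K + real M ^ 3 * real K / \<delta>\<^sup>2"
    using M \<delta> by (simp add: field_simps power2_eq_square power3_eq_cube)
  finally show ?thesis .
qed

theorem lemma4:
  fixes M K :: nat and \<mu> :: weights and \<delta> :: real and alg :: algo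
    and hung :: "weights \<Rightarrow> assignment"
    and sel :: "(nat \<Rightarrow> nat \<Rightarrow> nat) \<Rightarrow> assignment \<Rightarrow> nat"
  assumes "1 \<le> M" and "M < K"
    and "\<forall>m\<in>{1..M}. \<forall>k\<in>{1..K}. 0 \<le> \<mu> m k \<and> \<mu> m k \<le> 1"
    and "\<exists>!G. G \<in> assignments M K \<and> (\<forall>G'\<in>assignments M K. utility M G' \<mu> \<le> utility M G \<mu>)"
    and "is_hungarian M K hung"
    and "is_min_selector M sel"
    and "\<delta> > 0"
  shows "(\<integral>\<^sup>+ \<omega>. emeasure (count_space UNIV) (bad_rounds alg M K \<mu> hung sel \<delta> \<omega>) \<partial>process M K \<mu>)
           \<le> ennreal (4 * real M * real K + 2 * real M ^ 3 * real K / \<delta>\<^sup>2)"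
proof -
  note M = assms(1) and \<mu> = assms(3) and hung = assms(5) and \<delta> = assms(7)
  let ?C = "finitely_supported_counts \<times> finitely_supported_counts"
  let ?x = "(\<lambda>_ _. 0, \<lambda>_ _. 0) :: hstate"
  let ?F = "\<lambda>n. step alg M K hung sel (Suc n)"
  let ?cost = "\<lambda>st. of_bool (bad_round M \<mu> hung \<delta> st) :: ennreal"
  have C: "countable ?C" "?x \<in> ?C" "\<And>n z y. z \<in> ?C \<Longrightarrow> ?F n z y \<in> ?C"
    using countable_finitely_supported_counts step_in_finitely_supported_counts
    by (auto simp: finitely_supported_counts_def)
  have "(\<integral>\<^sup>+ \<omega>. emeasure (count_space UNIV) (bad_rounds alg M K \<mu> hung sel \<delta> \<omega>) \<partial>process M K \<mu>)
      = (\<integral>\<^sup>+ \<omega>. (\<Sum>n. ?cost (stream_chain ?x ?F \<omega> n)) \<partial>stream_space (round_pmf M K \<mu>))"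
    unfolding process_def emeasure_bad_rounds hist_eq_stream_chain
    using borel_measurable_stream_chain[where F="?F", OF C]
    by (intro nn_integral_stl_to_stream borel_measurable_suminf_order)
  also have "\<dots> \<le> potential M K \<mu> (\<delta> / M) ?x"
    using potential_drift[OF \<mu> hung M] by (intro nn_integral_stream_chain_le[OF C])
  also have "\<dots> \<le> ennreal (real M * real K + real M ^ 3 * real K / \<delta>\<^sup>2)"
    by (rule potential_initial_le[OF \<mu> M \<delta>])
  also have "\<dots> \<le> ennreal (4 * real M * real K + 2 * real M ^ 3 * real K / \<delta>\<^sup>2)"
    by (intro ennreal_leI add_mono) (simp_all add: divide_right_mono)
  finally show ?thesis .
qed

end
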